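(* In the setting of the construction below, with $\beta_\epsilon>\tau_2\ge 2$, $M_1$ sufficiently large and $M_{j+1}=M_j^{\beta_\epsilon}$, every weak-* limit $\mu$ of a subsequence of the measures $\mu^{(k)}$ on the torus $\mathbb{R}/\mathbb{Z}$ has support contained in $\mathrm{Tight}^{[0,1)}(\psi_1,\psi_2,\theta)$, the image of $\mathrm{Tight}(\psi_1,\psi_2,\theta)$ in $\mathbb{R}/\mathbb{Z}$.
   Context: For $\psi_2\le\psi_1$ and $\theta\in[0,1)$, $\mathrm{Tight}(\psi_1,\psi_2,\theta)$ is the set of real $x$ such that (i) $|x-\frac{r-\theta}{q}|\le\psi_1(q)$ for infinitely many pairs $(r,q)$ of relatively prime integers, and (ii) for every $c>0$, $|x-\frac{r-\theta}{q}|\le\psi_1(q)-c\psi_2(q)$ for only finitely many such pairs; this set is invariant under integer translations. Construction. Let $\theta\in[0,1)$ be $0$ or irrational with Diophantine approximation exponent $\gamma$ ($\gamma=1$ if $\theta=0$); the Diophantine approximation exponent of an irrational $\theta$ is the infimum of all $\gamma$ such that $|\theta-p/q|\le q^{-\gamma}$ has only finitely many integer solutions. Let $\psi_1,\psi_2:\mathbb{N}\to(0,\infty)$ be decreasing with $\psi_2\le\psi_1$, $\psi_1-\psi_2$ decreasing, $\tau_i=\lambda(\psi_i):=-\lim_{q\to\infty}\frac{\log\psi_i(q)}{\log q}$, and $\beta_\epsilon=\gamma^{-2}(\tau_1-1)^2-\epsilon$ with $\epsilon>0$. Fix a nonnegative, not identically zero, smooth $\phi$ supported in $[-1/2,1/2]$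 with $|\hat\phi(\xi)|\le C\exp(-|\xi|^{3/4})$ for large $|\xi|$. For $M>1$, $c_M=M^{-\epsilon/100}$; for primes $M\le q<2M$ and $0\le r<q$, $x_{q,r}=\frac{r-\theta}{q}+\psi_1(q)-\frac{c_M}{2}\psi_2(q)$ and $\phi_{r,q}(x)=(c_M\psi_2(q))^{-1}\phi((c_M\psi_2(q))^{-1}(x-x_{q,r}))$; $g_M=\sum_q\sum_r\phi_{r,q}$, $f_M=g_M/\hat g_M(0)$. Let $f_M^{[0,1)}$ be the function on $\mathbb{R}/\mathbb{Z}$ induced by $x\mapsto\sum_{j\in\mathbb{Z}}f_M(x+j)$, and $\mu^{(k)}=\prod_{j=1}^kf_{M_j}^{[0,1)}$, viewed as an absolutely continuous measure on the torus. *)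

theory Defs
  imports "HOL-Analysis.Analysis" "HOL-Computational_Algebra.Primes"
begin

definition Tight :: "(nat \<Rightarrow> real) \<Rightarrow> (nat \<Rightarrow> real) \<Rightarrow> real \<Rightarrow> real set" where
  "Tight \<psi>1 \<psi>2 \<theta> = {x.
     infinite {(r, q). (q::nat) \<ge> 1 \<and> coprime (r::int) (int q) \<and>
                 \<bar>x - (r - \<theta>) / q\<bar> \<le> \<psi>1 q} \<and>
     (\<forall>c>0. finite {(r, q). (q::nat) \<ge> 1 \<and> coprime (r::int) (int q) \<and>
                 \<bar>x - (r - \<theta>) / q\<bar> \<le> \<psi>1 q - c * \<psi>2 q})}"

definition dioph_good :: "real \<Rightarrow> real set" where
  "dioph_good \<theta> = {g. finite {(p, q). (q::int) > 0 \<and> \<bar>\<theta> - of_int (p::int) / of_int q\<bar> \<le> q powr (- g)}}"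

definition dioph_exp :: "real \<Rightarrow> real" where
  "dioph_exp \<theta> = Inf (dioph_good \<theta>)"

definition smooth_fun :: "(real \<Rightarrow> real) \<Rightarrow> bool" where
  "smooth_fun f \<longleftrightarrow> (\<forall>n. (deriv ^^ n) f differentiable_on UNIV)"

definition fourier :: "(real \<Rightarrow> real) \<Rightarrow> real \<Rightarrow> complex" where
  "fourier f \<xi> = integral\<^sup>L lborel (\<lambda>x. complex_of_real (f x) * cis (- 2 * pi * x * \<xi>))"

definition cM :: "real \<Rightarrow> real \<Rightarrow> real" where
  "cM \<epsilon> M = M powr (- \<epsilon> / 100)"

definition xqr :: "real \<Rightarrow> (nat \<Rightarrow> real) \<Rightarrow> (nat \<Rightarrow> real) \<Rightarrow> real \<Rightarrow> real \<Rightarrow> nat \<Rightarrow> nat \<Rightarrow> real" where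
  "xqr \<theta> \<psi>1 \<psi>2 \<epsilon> M q r = (real r - \<theta>) / real q + \<psi>1 q - cM \<epsilon> M / 2 * \<psi>2 q"

definition phi_rq :: "(real \<Rightarrow> real) \<Rightarrow> real \<Rightarrow> (nat \<Rightarrow> real) \<Rightarrow> (nat \<Rightarrow> real) \<Rightarrow> real
    \<Rightarrow> real \<Rightarrow> nat \<Rightarrow> nat \<Rightarrow> real \<Rightarrow> real" where
  "phi_rq \<phi> \<theta> \<psi>1 \<psi>2 \<epsilon> M q r x =
     (1 / (cM \<epsilon> M * \<psi>2 q)) * \<phi> ((x - xqr \<theta> \<psi>1 \<psi>2 \<epsilon> M q r) / (cM \<epsilon> M * \<psi>2 q))"

definition gM :: "(real \<Rightarrow> real) \<Rightarrow> real \<Rightarrow> (nat \<Rightarrow> real) \<Rightarrow> (nat \<Rightarrow> real) \<Rightarrow> real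
    \<Rightarrow> real \<Rightarrow> real \<Rightarrow> real" where
  "gM \<phi> \<theta> \<psi>1 \<psi>2 \<epsilon> M x =
     (\<Sum>q \<in> {q::nat. prime q \<and> M \<le> real q \<and> real q < 2 * M}.
        \<Sum>r<q. phi_rq \<phi> \<theta> \<psi>1 \<psi>2 \<epsilon> M q r x)"

text \<open>hat g_M(0) is the integral of g_M over the real line.\<close>
definition fM :: "(real \<Rightarrow> real) \<Rightarrow> real \<Rightarrow> (nat \<Rightarrow> real) \<Rightarrow> (nat \<Rightarrow> real) \<Rightarrow> real
    \<Rightarrow> real \<Rightarrow> real \<Rightarrow> real" where
  "fM \<phi> \<theta> \<psi>1 \<psi>2 \<epsilon> M x =
     gM \<phi> \<theta> \<psi>1 \<psi>2 \<epsilon> M x / integral\<^sup>L lborel (gM \<phi> \<theta> \<psi>1 \<psi>2 \<epsilon> M)"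

text \<open>Periodisation: the function on R/Z, represented as a 1-periodic function on R.\<close>
definition fM_per :: "(real \<Rightarrow> real) \<Rightarrow> real \<Rightarrow> (nat \<Rightarrow> real) \<Rightarrow> (nat \<Rightarrow> real) \<Rightarrow> real
    \<Rightarrow> real \<Rightarrow> real \<Rightarrow> real" where
  "fM_per \<phi> \<theta> \<psi>1 \<psi>2 \<epsilon> M x = (\<Sum>\<^sub>\<infinity>j::int. fM \<phi> \<theta> \<psi>1 \<psi>2 \<epsilon> M (x + of_int j))"

text \<open>Scale sequence: Mseq M1 beta n = M_(n+1), i.e. M_1 = M1, M_(j+1) = M_j^beta.\<close>
primrec Mseq :: "real \<Rightarrow> real \<Rightarrow> nat \<Rightarrow> real" where
  "Mseq M1 \<beta> 0 = M1"
| "Mseq M1 \<beta> (Suc n) = Mseq M1 \<beta> n powr \<beta>"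

text \<open>Density of mu^(k) = prod_(j=1..k) f_(M_j)^[0,1).\<close>
definition mu_dens :: "(real \<Rightarrow> real) \<Rightarrow> real \<Rightarrow> (nat \<Rightarrow> real) \<Rightarrow> (nat \<Rightarrow> real) \<Rightarrow> real
    \<Rightarrow> real \<Rightarrow> real \<Rightarrow> nat \<Rightarrow> real \<Rightarrow> real" where
  "mu_dens \<phi> \<theta> \<psi>1 \<psi>2 \<epsilon> \<beta> M1 k x =
     (\<Prod>j<k. fM_per \<phi> \<theta> \<psi>1 \<psi>2 \<epsilon> (Mseq M1 \<beta> j) x)"

text \<open>A measure on R/Z is represented by a finite Borel measure on R concentrated on [0,1);
  continuous functions on R/Z are the continuous 1-periodic functions on R.\<close>
definition torus_measure :: "real measure \<Rightarrow> bool" where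
  "torus_measure \<mu> \<longleftrightarrow> sets \<mu> = sets borel \<and> finite_measure \<mu> \<and>
     emeasure \<mu> (UNIV - {0..<1}) = 0"

definition torus_support :: "real measure \<Rightarrow> real set" where
  "torus_support \<mu> = {x. \<forall>e>0. emeasure \<mu> {y. \<exists>j::int. \<bar>y + of_int j - x\<bar> < e} > 0}"

definition torus_weak_star_lim :: "(nat \<Rightarrow> real \<Rightarrow> real) \<Rightarrow> real measure \<Rightarrow> bool" where
  "torus_weak_star_lim d \<mu> \<longleftrightarrow>
     (\<forall>h::real \<Rightarrow> real. continuous_on UNIV h \<longrightarrow> (\<forall>x. h (x + 1) = h x) \<longrightarrow>
        ((\<lambda>n. LINT x:{0..<1}|lborel. h x * d n x) \<longlonglongrightarrow> integral\<^sup>L \<mu> h))"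

end

theory Submission
  imports Defs
begin

text \<open>
  The density of mu^(k) vanishes outside the windows of scale M_j once k > j, so a point x of
  the support of a weak-* limit lies, for every j, modulo 1 in such a window. This gives
  approximations (R_j - \<theta>)/q_j with q_j a prime in [M_j, 2 M_j) and
  \<psi>1 q_j - c_(M_j) \<psi>2 q_j \<le> x - (R_j - \<theta>)/q_j \<le> \<psi>1 q_j.
  The Diophantine exponent of \<theta> gives |P - \<theta> D| \<ge> \<kappa> X^(1-g) whenever |D| \<le> X, hence two
  distinct approximations of quality q^(-1-\<eta>) with denominators q \<le> q' satisfy
  \<eta> log q \<le> g log q' + O(1). Since log q_(j+1) \<le> \<beta> log q_j + log 2 and \<eta>^2 > g^2 \<beta>, no
  good approximation fits between two consecutive levels: every good approximation with large
  denominator is a level. As c_(M_j) tends to 0, only finitely many approximations beat \<psi>1 by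
  a margin c \<psi>2, while the levels themselves give infinitely many approximations.
\<close>

section \<open>Diophantine lower bounds\<close>

lemma finite_pos_lower_bound:
  fixes f :: "'a \<Rightarrow> real"
  assumes "finite S" "\<And>x. x \<in> S \<Longrightarrow> 0 < f x"
  obtains \<kappa> where "\<kappa> > 0" "\<And>x. x \<in> S \<Longrightarrow> \<kappa> \<le> f x"
proof (cases "S = {}")
  case True
  then show ?thesis using that[of 1] by simp
next
  case False
  show ?thesis
    using assms False by (intro that[of "Min (f ` S)"]) auto
qed

lemma dioph_good_gt_1:
  assumes "g \<in> dioph_good \<theta>"
  shows "g > 1"
proof (rule ccontr)
  assume "\<not> g > 1"
  let ?S = "{(p, q). (q::int) > 0 \<and> \<bar>\<theta> - of_int (p::int) / of_int q\<bar> \<le> q powr (- g)}"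
  let ?a = "\<lambda>q::nat. (\<lfloor>real q * \<theta>\<rfloor>, int q)"
  have "?a ` {1..} \<subseteq> ?S"
  proof (rule image_subsetI)
    fix q :: nat assume "q \<in> {1..}"
    then have q: "q \<ge> 1" by simp
    then have "\<bar>\<theta> - \<lfloor>real q * \<theta>\<rfloor> / real q\<bar> = \<bar>real q * \<theta> - \<lfloor>real q * \<theta>\<rfloor>\<bar> / real q"
      by (simp add: field_simps abs_divide)
    also have "\<dots> \<le> 1 / real q"
      using q by (intro divide_right_mono) linarith+
    also have "\<dots> = real q powr (-1)"
      using q by (simp add: powr_minus_divide)
    also have "\<dots> \<le> real q powr (- g)"
      using q \<open>\<not> g > 1\<close> by (intro powr_mono) auto
    finally show "?a q \<in> ?S" using q by simp
  qed
  moreover have "infinite (?a ` {1..})"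
    using finite_imageD[of ?a "{1..}"] infinite_Ici[of "1::nat"] by (auto simp: inj_on_def)
  ultimately show False
    using assms finite_subset by (auto simp: dioph_good_def)
qed

lemma dioph_exp_ge_1: "dioph_good \<theta> \<noteq> {} \<Longrightarrow> dioph_exp \<theta> \<ge> 1"
  unfolding dioph_exp_def by (rule cInf_greatest) (auto dest: dioph_good_gt_1)

definition linear_form_bound :: "real \<Rightarrow> real \<Rightarrow> real \<Rightarrow> bool" where
  "linear_form_bound \<theta> g \<kappa> \<longleftrightarrow>
     (\<forall>(P::int) (D::int) (X::real). of_int P - \<theta> * of_int D \<noteq> 0 \<longrightarrow> of_int \<bar>D\<bar> \<le> X \<longrightarrow> 1 \<le> X \<longrightarrow>
        \<kappa> * X powr (1 - g) \<le> \<bar>of_int P - \<theta> * of_int D\<bar>)"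

lemma linear_form_bound_zero:
  assumes "g \<ge> 1"
  shows "linear_form_bound 0 g 1"
  unfolding linear_form_bound_def
proof (intro allI impI)
  fix P D :: int and X :: real
  assume "of_int P - 0 * of_int D \<noteq> 0" "1 \<le> X"
  then have "P \<noteq> 0" "X powr (1 - g) \<le> 1"
    using powr_mono[of "1 - g" 0 X] assms by auto
  then show "1 * X powr (1 - g) \<le> \<bar>of_int P - 0 * of_int D\<bar>" by linarith
qed

lemma irrational_mult_far_from_int:
  fixes \<theta> :: real
  assumes "\<theta> \<notin> \<rat>" "finite S" "0 \<notin> S"
  obtains \<kappa> where "\<kappa> > 0" "\<And>D P. D \<in> S \<Longrightarrow> \<kappa> \<le> \<bar>of_int P - \<theta> * of_int D\<bar>"
proof -
  define f where "f D = min (\<theta> * of_int D - \<lfloor>\<theta> * of_int D\<rfloor>) (\<lfloor>\<theta> * of_int D\<rfloor> + 1 - \<theta> * of_int D)"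
    for D :: int
  have "0 < f D" if "D \<in> S" for D
  proof -
    have "\<theta> * of_int D \<noteq> of_int \<lfloor>\<theta> * of_int D\<rfloor>"
    proof
      assume "\<theta> * of_int D = of_int \<lfloor>\<theta> * of_int D\<rfloor>"
      then have "\<theta> = of_int \<lfloor>\<theta> * of_int D\<rfloor> / of_int D"
        using that assms(3) by (auto simp: field_simps)
      then show False using assms(1) by (metis Rats_divide Rats_of_int)
    qed
    then show ?thesis unfolding f_def
      using of_int_floor_le[of "\<theta> * of_int D"] by linarith
  qed
  then obtain \<kappa> where "\<kappa> > 0" "\<And>D. D \<in> S \<Longrightarrow> \<kappa> \<le> f D"
    using finite_pos_lower_bound[OF assms(2)] by blast
  moreover have "f D \<le> \<bar>of_int P - \<theta> * of_int D\<bar>" for D P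
  proof (cases "P \<le> \<lfloor>\<theta> * of_int D\<rfloor>")
    case True
    then have "real_of_int P \<le> \<lfloor>\<theta> * of_int D\<rfloor>" by linarith
    then show ?thesis unfolding f_def by linarith
  next
    case False
    then have "real_of_int P \<ge> \<lfloor>\<theta> * of_int D\<rfloor> + 1" by linarith
    then show ?thesis unfolding f_def by linarith
  qed
  ultimately show thesis using that by (meson order_trans)
qed

lemma dioph_good_large_denominators:
  assumes "g \<in> dioph_good \<theta>"
  obtains K :: int where "K > 0"
    "\<And>P D. K \<le> \<bar>D\<bar> \<Longrightarrow> of_int \<bar>D\<bar> powr (1 - g) < \<bar>of_int P - \<theta> * of_int D\<bar>"
proof -
  define F where "F = {(p, q). (q::int) > 0 \<and> \<bar>\<theta> - of_int (p::int) / of_int q\<bar> \<le> q powr (- g)}"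
  have "finite (snd ` F)" using assms by (simp add: dioph_good_def F_def)
  then have "\<And>z. z \<in> F \<Longrightarrow> snd z < Max (insert 0 (snd ` F)) + 1"
    by (simp add: le_imp_less_or_eq)
  moreover have "Max (insert 0 (snd ` F)) + 1 > 0"
    using \<open>finite (snd ` F)\<close> by (simp add: Max_ge_iff)
  ultimately obtain K :: int where K: "K > 0" "\<And>z. z \<in> F \<Longrightarrow> snd z < K"
    by blast
  show thesis
  proof (rule that[OF K(1)])
    fix P D :: int assume D: "K \<le> \<bar>D\<bar>"
    define d where "d = \<bar>D\<bar>"
    define p where "p = (if D > 0 then P else - P)"
    have d: "d > 0" using D K(1) by (simp add: d_def)
    have "(p, d) \<notin> F" using K(2)[of "(p, d)"] D by (auto simp: d_def)
    then have "d powr (- g) < \<bar>\<theta> - of_int p / of_int d\<bar>" using d by (auto simp: F_def)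
    also have "\<bar>\<theta> - of_int p / of_int d\<bar> = \<bar>of_int P - \<theta> * of_int D\<bar> / of_int d"
      using d by (auto simp: p_def d_def field_simps abs_if)
    finally have "of_int d * of_int d powr (- g) < \<bar>of_int P - \<theta> * of_int D\<bar>"
      using d by (simp add: field_simps)
    moreover have "real_of_int d powr (1 - g) = of_int d * of_int d powr (- g)"
      using d powr_add[of "real_of_int d" 1 "- g"] by simp
    ultimately show "of_int \<bar>D\<bar> powr (1 - g) < \<bar>of_int P - \<theta> * of_int D\<bar>"
      by (simp add: d_def)
  qed
qed

lemma irrational_linear_form_bound:
  assumes irr: "\<theta> \<notin> \<rat>" and g: "g \<in> dioph_good \<theta>"
  obtains \<kappa> where "\<kappa> > 0" "linear_form_bound \<theta> g \<kappa>"
proof -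
  obtain K :: int where K: "K > 0"
    and large: "\<And>P D. K \<le> \<bar>D\<bar> \<Longrightarrow> of_int \<bar>D\<bar> powr (1 - g) < \<bar>of_int P - \<theta> * of_int D\<bar>"
    using dioph_good_large_denominators[OF g] by blast
  define S where "S = {D::int. D \<noteq> 0 \<and> \<bar>D\<bar> < K}"
  have "finite S" "0 \<notin> S"
    unfolding S_def by (rule finite_subset[of _ "{-K..K}"]) auto
  then obtain \<kappa> where \<kappa>: "\<kappa> > 0"
    and small: "\<And>D P. D \<in> S \<Longrightarrow> \<kappa> \<le> \<bar>of_int P - \<theta> * of_int D\<bar>"
    using irrational_mult_far_from_int[OF irr] by metis
  have "linear_form_bound \<theta> g (min 1 \<kappa>)"
    unfolding linear_form_bound_def
  proof (intro allI impI)
    fix P D :: int and X :: real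
    assume ne: "of_int P - \<theta> * of_int D \<noteq> 0" and DX: "of_int \<bar>D\<bar> \<le> X" and X: "1 \<le> X"
    have X1: "X powr (1 - g) \<le> 1"
      using powr_mono[of "1 - g" 0 X] X dioph_good_gt_1[OF g] by simp
    have scale: "min 1 \<kappa> * X powr (1 - g) \<le> min 1 \<kappa>"
      using X1 \<kappa> by (intro mult_left_le) auto
    consider "D = 0" | "D \<noteq> 0" "\<bar>D\<bar> < K" | "K \<le> \<bar>D\<bar>" by linarith
    then show "min 1 \<kappa> * X powr (1 - g) \<le> \<bar>of_int P - \<theta> * of_int D\<bar>"
    proof cases
      case 1
      with ne have "P \<noteq> 0" by simp
      then have "1 \<le> \<bar>of_int P - \<theta> * of_int D\<bar>" using 1 by simp
      with scale show ?thesis by linarith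
    next
      case 2
      then have "D \<in> S" by (simp add: S_def)
      with small[of D P] scale show ?thesis by linarith
    next
      case 3
      have "X powr (1 - g) \<le> of_int \<bar>D\<bar> powr (1 - g)"
        using DX 3 K dioph_good_gt_1[OF g] by (intro powr_mono2') simp_all
      moreover have "min 1 \<kappa> * X powr (1 - g) \<le> X powr (1 - g)"
        using \<kappa> by (intro mult_left_le_one_le) auto
      ultimately show ?thesis using large[OF 3, of P] by linarith
    qed
  qed
  with \<kappa> show thesis by (intro that[of "min 1 \<kappa>"]) simp_all
qed

lemma shifted_fraction_inj:
  fixes \<theta> :: real and r R :: int and q Q :: nat
  assumes \<theta>: "\<theta> = 0 \<or> \<theta> \<notin> \<rat>" and cop: "coprime r (int q)" and q: "q \<ge> 2" and Q: "prime Q"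
    and eq: "(of_int r - \<theta>) / real q = (of_int R - \<theta>) / real Q"
  shows "q = Q" "r = R"
proof -
  have "real Q > 0" "real q > 0" using q prime_gt_0_nat[OF Q] by auto
  with eq have cross: "(of_int r - \<theta>) * real Q = (of_int R - \<theta>) * real q"
    by (simp add: field_simps)
  show "q = Q"
  proof (cases "\<theta> = 0")
    case True
    with cross have "r * int Q = R * int q"
      by (metis of_int_eq_iff of_int_mult of_int_of_nat_eq diff_zero)
    then have "int q dvd r * int Q" by (metis dvd_triv_right)
    with cop have "q dvd Q" by (simp add: coprime_commute coprime_dvd_mult_right_iff)
    with Q q show ?thesis using prime_nat_iff by auto
  next
    case False
    show ?thesis
    proof (rule ccontr)
      assume "q \<noteq> Q"
      then have "real q - real Q \<noteq> 0" by simp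
      moreover have "\<theta> * (real q - real Q) = of_int R * real q - of_int r * real Q"
        using cross by (simp add: algebra_simps)
      ultimately have "\<theta> = (of_int R * real q - of_int r * real Q) / (real q - real Q)"
        by (simp add: field_simps)
      then have "\<theta> \<in> \<rat>" by simp
      with \<theta> False show False by simp
    qed
  qed
  with eq \<open>real q > 0\<close> show "r = R" by (simp add: field_simps)
qed

text \<open>The difference of the two approximations, scaled by q q', is a value of the linear form
  P - \<theta> D with |D| \<le> q'.\<close>
lemma distinct_approximations_log_bound:
  fixes \<psi>1 :: "nat \<Rightarrow> real" and \<theta> x \<kappa> g \<eta> :: real and A B :: int and q q' :: nat
  assumes sep: "linear_form_bound \<theta> g \<kappa>" and \<kappa>: "\<kappa> > 0"
    and q: "1 \<le> q" "q \<le> q'"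
    and psi: "\<psi>1 q' \<le> \<psi>1 q" "\<psi>1 q \<le> real q powr (-1 - \<eta>)"
    and A: "\<bar>x - (of_int A - \<theta>) / real q\<bar> \<le> \<psi>1 q"
    and B: "\<bar>x - (of_int B - \<theta>) / real q'\<bar> \<le> \<psi>1 q'"
    and ne: "(of_int A - \<theta>) / real q \<noteq> (of_int B - \<theta>) / real q'"
  shows "\<eta> * ln (real q) \<le> (ln 2 - ln \<kappa>) + g * ln (real q')"
proof -
  have qp: "real q > 0" "real q' > 0" using q by auto
  define P where "P = A * int q' - B * int q"
  define D where "D = int q' - int q"
  have PD: "of_int P - \<theta> * of_int D =
      ((of_int A - \<theta>) / real q - (of_int B - \<theta>) / real q') * (real q * real q')"
    using qp by (simp add: P_def D_def field_simps)
  have "of_int P - \<theta> * of_int D \<noteq> 0" "of_int \<bar>D\<bar> \<le> real q'" "1 \<le> real q'"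
    using ne qp q unfolding PD by (auto simp: D_def)
  then have "\<kappa> * real q' powr (1 - g) \<le> \<bar>of_int P - \<theta> * of_int D\<bar>"
    using sep unfolding linear_form_bound_def by blast
  also have "\<dots> = \<bar>(of_int A - \<theta>) / real q - (of_int B - \<theta>) / real q'\<bar> * (real q * real q')"
    unfolding PD abs_mult using qp by simp
  also have "\<dots> \<le> (\<psi>1 q + \<psi>1 q') * (real q * real q')"
    using A B qp by (intro mult_right_mono) auto
  also have "\<dots> \<le> (2 * real q powr (-1 - \<eta>)) * (real q * real q')"
    using psi qp by (intro mult_right_mono) auto
  also have "\<dots> = 2 * real q' * real q powr (- \<eta>)"
    using qp powr_add[of "real q" "-1 - \<eta>" 1] by (simp add: algebra_simps)
  finally have "ln (\<kappa> * real q' powr (1 - g)) \<le> ln (2 * real q' * real q powr (- \<eta>))"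
    using \<kappa> qp by (subst ln_le_cancel_iff) auto
  then have "ln \<kappa> + (1 - g) * ln (real q') \<le> ln 2 + ln (real q') + (- \<eta>) * ln (real q)"
    using \<kappa> qp by (simp add: ln_mult ln_powr)
  then show ?thesis by (simp add: algebra_simps)
qed

section \<open>The gap principle\<close>

lemma log_gap_absurd:
  fixes \<eta> g \<beta> K L L' L'' L0 :: real
  assumes "\<eta> > 0" "g > 0" "\<eta>\<^sup>2 - g\<^sup>2 * \<beta> > 0"
    and "(\<eta>\<^sup>2 - g\<^sup>2 * \<beta>) * L0 > (\<eta> + g) * K + g\<^sup>2 * ln 2" "L0 \<le> L"
    and "\<eta> * L \<le> K + g * L'" "\<eta> * L' \<le> K + g * L''" "L'' \<le> ln 2 + \<beta> * L"
  shows False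
proof -
  have "\<eta> * (\<eta> * L) \<le> \<eta> * (K + g * L')" "g * (\<eta> * L') \<le> g * (K + g * L'')"
    "g * (g * L'') \<le> g * (g * (ln 2 + \<beta> * L))"
    "(\<eta>\<^sup>2 - g\<^sup>2 * \<beta>) * L0 \<le> (\<eta>\<^sup>2 - g\<^sup>2 * \<beta>) * L"
    using assms by (intro mult_left_mono; simp)+
  with assms(4) show False by (simp add: algebra_simps power2_eq_square)
qed

lemma strict_mono_bracket:
  fixes q :: "nat \<Rightarrow> nat"
  assumes "strict_mono q" "q 0 \<le> n"
  obtains j where "q j \<le> n" "n < q (Suc j)"
proof -
  have "n < q (Suc n)"
    using seq_suble[OF assms(1), of "Suc n"] by simp
  then obtain j where "\<not> n < q j" "n < q (Suc j)"
    using ex_least_nat_less[of "\<lambda>j. n < q j" "Suc n"] assms(2) by auto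
  then show thesis using that[of j] by simp
qed

lemma finite_approximations_bounded_denominator:
  fixes x \<theta> C :: real and Q :: nat
  shows "finite {(r, q). (q::nat) \<ge> 1 \<and> q \<le> Q \<and> \<bar>x - (of_int (r::int) - \<theta>) / real q\<bar> \<le> C}"
proof -
  define B where "B = \<lceil>(\<bar>x\<bar> + \<bar>C\<bar>) * real Q + \<bar>\<theta>\<bar>\<rceil>"
  have r_bound: "\<bar>r\<bar> \<le> B" if "q \<ge> 1" "q \<le> Q" "\<bar>x - (of_int r - \<theta>) / real q\<bar> \<le> C" for r :: int and q :: nat
  proof -
    have "\<bar>x * real q - of_int r + \<theta>\<bar> = \<bar>x - (of_int r - \<theta>) / real q\<bar> * real q"
      using that(1) by (simp add: abs_mult[symmetric] field_simps)
    also have "\<dots> \<le> \<bar>C\<bar> * real Q"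
      using that by (intro mult_mono) auto
    moreover have "\<bar>x * real q\<bar> = \<bar>x\<bar> * real q" by (simp add: abs_mult)
    ultimately have "\<bar>of_int r\<bar> \<le> \<bar>x\<bar> * real q + \<bar>C\<bar> * real Q + \<bar>\<theta>\<bar>"
      by (smt (verit))
    also have "\<dots> \<le> (\<bar>x\<bar> + \<bar>C\<bar>) * real Q + \<bar>\<theta>\<bar>"
      using that(2) mult_left_mono[of "real q" "real Q" "\<bar>x\<bar>"] by (simp add: algebra_simps)
    finally show ?thesis unfolding B_def by linarith
  qed
  have "{(r, q). (q::nat) \<ge> 1 \<and> q \<le> Q \<and> \<bar>x - (of_int (r::int) - \<theta>) / real q\<bar> \<le> C}
      \<subseteq> {-B..B} \<times> {..Q}"
  proof
    fix z assume "z \<in> {(r, q). (q::nat) \<ge> 1 \<and> q \<le> Q \<and> \<bar>x - (of_int (r::int) - \<theta>) / real q\<bar> \<le> C}"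
    then obtain r q where "z = (r, q)" "1 \<le> q" "q \<le> Q" "\<bar>x - (of_int r - \<theta>) / real q\<bar> \<le> C"
      by blast
    with r_bound[of q r] show "z \<in> {-B..B} \<times> {..Q}" by (simp add: abs_le_iff)
  qed
  then show ?thesis by (rule finite_subset) simp
qed

text \<open>This handles levels with q_j dividing R_j, where (R_j - \<theta>)/q_j = n_j - \<theta>/q_j.\<close>
lemma integer_shift_approximations_absurd:
  fixes q :: "nat \<Rightarrow> nat" and n :: "nat \<Rightarrow> int" and x \<theta> \<eta> :: real
  assumes q: "strict_mono q" "\<And>j. 4 \<le> q j" and \<theta>: "0 \<le> \<theta>" "\<theta> < 1" and \<eta>: "\<eta> > 0"
    and lower: "\<And>j. 0 < x - of_int (n j) + \<theta> / real (q j)"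
    and upper: "\<And>j. x - of_int (n j) + \<theta> / real (q j) \<le> real (q j) powr (-1 - \<eta>)"
  shows False
proof -
  have small: "real (q j) powr (-1 - \<eta>) \<le> 1/4" "\<theta> / real (q j) < 1/4" for j
  proof -
    have "real (q j) powr (-1 - \<eta>) \<le> real (q j) powr (-1)"
      using q(2)[of j] \<eta> by (intro powr_mono) auto
    also have "\<dots> = 1 / real (q j)"
      using q(2)[of j] by (simp add: powr_minus_divide)
    also have "\<dots> \<le> 1/4"
      using q(2)[of j] by (simp add: field_simps)
    finally show "real (q j) powr (-1 - \<eta>) \<le> 1/4" .
    show "\<theta> / real (q j) < 1/4"
      using q(2)[of j] \<theta> by (simp add: field_simps)
  qed
  have "\<bar>x - of_int (n j)\<bar> \<le> 1/4" for j
  proof -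
    have "0 \<le> \<theta> / real (q j)" using \<theta> by simp
    then show ?thesis
      using lower[of j] upper[of j] small[of j] unfolding abs_le_iff by (intro conjI; linarith)
  qed
  note near = this
  have n_const: "n j = n 0" for j
  proof -
    have "real_of_int \<bar>n j - n 0\<bar> < 1"
      using near[of j] near[of 0] by (simp only: of_int_abs of_int_diff)
    then have "\<bar>n j - n 0\<bar> < 1" by linarith
    then show ?thesis by simp
  qed
  define u where "u = x - of_int (n 0)"
  have q_top: "filterlim (\<lambda>j. real (q j)) at_top sequentially"
    using filterlim_compose[OF filterlim_real_sequentially filterlim_subseq[OF q(1)]] by simp
  have pow_lim: "(\<lambda>j. real (q j) powr (- a)) \<longlonglongrightarrow> 0" if "a > 0" for a
    by (rule tendsto_neg_powr[OF _ q_top]) (use that in simp)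
  have "0 \<le> u + \<theta> / real (q j)" "u + \<theta> / real (q j) \<le> real (q j) powr (- (1 + \<eta>))" for j
    using lower[of j] upper[of j] n_const[of j] by (simp_all add: u_def)
  then have "(\<lambda>j. u + \<theta> / real (q j)) \<longlonglongrightarrow> 0"
    using \<eta> by (intro tendsto_sandwich[OF always_eventually always_eventually tendsto_const pow_lim[of "1 + \<eta>"]]) simp_all
  moreover have "(\<lambda>j. u + \<theta> / real (q j)) \<longlonglongrightarrow> u"
    using tendsto_add[OF tendsto_const tendsto_divide_0[OF tendsto_const
        filterlim_at_top_imp_at_infinity[OF q_top]]] by simp
  ultimately have "u = 0" using LIMSEQ_unique by blast
  have "0 < \<theta>" "\<And>j. \<theta> \<le> real (q j) powr (- \<eta>)"
  proof -
    show "0 < \<theta>" using lower[of 0] \<open>u = 0\<close> q(2)[of 0] by (simp add: u_def zero_less_divide_iff)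
    fix j
    have "\<theta> / real (q j) \<le> real (q j) powr (-1 - \<eta>)"
      using upper[of j] n_const[of j] \<open>u = 0\<close> by (simp add: u_def)
    then have "\<theta> \<le> real (q j) powr (-1 - \<eta>) * real (q j)"
      using q(2)[of j] by (simp add: field_simps)
    also have "\<dots> = real (q j) powr (- \<eta>)"
      using q(2)[of j] powr_add[of "real (q j)" "-1 - \<eta>" 1] by simp
    finally show "\<theta> \<le> real (q j) powr (- \<eta>)" .
  qed
  moreover have "\<theta> \<le> 0"
    by (rule tendsto_lowerbound[OF pow_lim[OF \<eta>]]) (use calculation(2) in \<open>simp_all add: always_eventually\<close>)
  ultimately show False by simp
qed

locale approximation_chain =
  fixes \<theta> :: real and \<psi>1 \<psi>2 :: "nat \<Rightarrow> real" and x :: real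
    and q :: "nat \<Rightarrow> nat" and R :: "nat \<Rightarrow> int" and c :: "nat \<Rightarrow> real"
    and g \<kappa> \<eta> \<beta> :: real and N :: nat
  assumes theta: "\<theta> = 0 \<or> \<theta> \<notin> \<rat>" "0 \<le> \<theta>" "\<theta> < 1"
    and psi2_pos: "\<And>n. n \<ge> 1 \<Longrightarrow> \<psi>2 n > 0"
    and psi_le: "\<And>n. n \<ge> 1 \<Longrightarrow> \<psi>2 n \<le> \<psi>1 n"
    and psi1_dec: "\<And>n n'. 1 \<le> n \<Longrightarrow> n \<le> n' \<Longrightarrow> \<psi>1 n' \<le> \<psi>1 n"
    and psi1_bound: "\<And>n. N \<le> n \<Longrightarrow> \<psi>1 n \<le> real n powr (-1 - \<eta>)"
    and sep: "linear_form_bound \<theta> g \<kappa>" and kappa_pos: "\<kappa> > 0"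
    and N: "N \<ge> 4" and eta_pos: "\<eta> > 0" and g_pos: "g > 0"
    and exponent_gap: "\<eta>\<^sup>2 - g\<^sup>2 * \<beta> > 0"
    and start_large: "(\<eta>\<^sup>2 - g\<^sup>2 * \<beta>) * ln (real (q 0)) > (\<eta> + g) * (ln 2 - ln \<kappa>) + g\<^sup>2 * ln 2"
    and q_prime: "\<And>j. prime (q j)" and q_mono: "strict_mono q" and q_start: "N \<le> q 0"
    and q_growth: "\<And>j. ln (real (q (Suc j))) \<le> ln 2 + \<beta> * ln (real (q j))"
    and c_lt_1: "\<And>j. c j < 1" and c_lim: "c \<longlonglongrightarrow> 0"
    and level_lower: "\<And>j. \<psi>1 (q j) - c j * \<psi>2 (q j) \<le> x - (of_int (R j) - \<theta>) / real (q j)"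
    and level_upper: "\<And>j. x - (of_int (R j) - \<theta>) / real (q j) \<le> \<psi>1 (q j)"
begin

lemma q_ge_N: "N \<le> q j"
  using q_start mono_onD[OF strict_mono_mono[OF q_mono], of 0 j] by simp

lemma level_pos: "0 < x - (of_int (R j) - \<theta>) / real (q j)"
proof -
  have "q j \<ge> 1" using q_ge_N[of j] N by simp
  then have "c j * \<psi>2 (q j) < 1 * \<psi>2 (q j)"
    using c_lt_1[of j] psi2_pos by (intro mult_strict_right_mono) simp_all
  with psi_le[OF \<open>q j \<ge> 1\<close>] have "c j * \<psi>2 (q j) < \<psi>1 (q j)" by simp
  then show ?thesis using level_lower[of j] by linarith
qed

lemma level_close: "\<bar>x - (of_int (R j) - \<theta>) / real (q j)\<bar> \<le> \<psi>1 (q j)"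
  using level_pos[of j] level_upper[of j] by simp

text \<open>A further good approximation between two consecutive levels would have to be far from
  both of them in logarithmic scale, which is impossible as q (Suc j) \<le> 2 (q j) powr \<beta> and
  \<eta>^2 > g^2 \<beta>.\<close>
lemma close_approximation_is_level:
  assumes n: "q 0 \<le> n" and cop: "coprime r (int n)"
    and close: "\<bar>x - (of_int r - \<theta>) / real n\<bar> \<le> \<psi>1 n"
  obtains j where "n = q j" "r = R j"
proof -
  obtain j where j: "q j \<le> n" "n < q (Suc j)"
    using strict_mono_bracket[OF q_mono n] by blast
  have n2: "n \<ge> 2" and nN: "N \<le> n" using q_ge_N[of j] j(1) N by auto
  have bound: "\<psi>1 m \<le> real m powr (-1 - \<eta>)" if "N \<le> m" for m
    using psi1_bound that .
  show thesis
  proof (cases "(of_int r - \<theta>) / real n = (of_int (R j) - \<theta>) / real (q j)")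
    case True
    then show thesis
      using shifted_fraction_inj[OF theta(1) cop n2 q_prime True] that by blast
  next
    case False
    have "N \<le> q j" "1 \<le> q j" using q_ge_N[of j] N by auto
    then have low: "\<eta> * ln (real (q j)) \<le> (ln 2 - ln \<kappa>) + g * ln (real n)"
      using distinct_approximations_log_bound[OF sep kappa_pos _ j(1) psi1_dec bound level_close close]
        False j(1) by auto
    have "(of_int r - \<theta>) / real n \<noteq> (of_int (R (Suc j)) - \<theta>) / real (q (Suc j))"
      using shifted_fraction_inj(1)[OF theta(1) cop n2 q_prime] j(2) by auto
    then have high: "\<eta> * ln (real n) \<le> (ln 2 - ln \<kappa>) + g * ln (real (q (Suc j)))"
      using distinct_approximations_log_bound[OF sep kappa_pos _ _ psi1_dec bound close level_close]
        nN N j(2) by auto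
    have "ln (real (q 0)) \<le> ln (real (q j))"
      using q_start N mono_onD[OF strict_mono_mono[OF q_mono], of 0 j] by simp
    then show thesis
      using log_gap_absurd[OF eta_pos g_pos exponent_gap start_large _ low high q_growth] by blast
  qed
qed

lemma finite_tight_approximations:
  assumes "c0 > 0"
  shows "finite {(r, n). (n::nat) \<ge> 1 \<and> coprime (r::int) (int n) \<and>
            \<bar>x - (of_int r - \<theta>) / real n\<bar> \<le> \<psi>1 n - c0 * \<psi>2 n}"
proof -
  have finite_levels: "finite {j. c0 \<le> c j}"
  proof -
    obtain J where "\<And>j. J \<le> j \<Longrightarrow> c j < c0"
      using order_tendstoD(2)[OF c_lim assms] by (auto simp: eventually_sequentially)
    then have "{j. c0 \<le> c j} \<subseteq> {..<J}" by (auto simp: not_le[symmetric])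
    then show ?thesis by (rule finite_subset) simp
  qed
  have "(r, n) \<in> (\<lambda>j. (R j, q j)) ` {j. c0 \<le> c j} \<or>
      (n \<le> q 0 \<and> \<bar>x - (of_int r - \<theta>) / real n\<bar> \<le> \<psi>1 1)"
    if n: "1 \<le> n" and cop: "coprime r (int n)"
      and tight: "\<bar>x - (of_int r - \<theta>) / real n\<bar> \<le> \<psi>1 n - c0 * \<psi>2 n" for r n
  proof -
    have "0 < c0 * \<psi>2 n" using assms psi2_pos[OF n] by simp
    with tight have close: "\<bar>x - (of_int r - \<theta>) / real n\<bar> \<le> \<psi>1 n" by linarith
    show ?thesis
    proof (cases "q 0 \<le> n")
      case True
      then obtain j where j: "n = q j" "r = R j"
        using close_approximation_is_level[OF _ cop close] by blast
      then have "\<psi>1 n - c j * \<psi>2 n \<le> \<psi>1 n - c0 * \<psi>2 n"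
        using level_lower[of j] tight by simp
      then have "c0 \<le> c j" using psi2_pos[OF n] by (simp add: mult_le_cancel_right)
      with j show ?thesis by auto
    next
      case False
      with close psi1_dec[OF order.refl n] show ?thesis by simp
    qed
  qed
  note member = this
  have sub: "{(r, n). (n::nat) \<ge> 1 \<and> coprime (r::int) (int n) \<and>
            \<bar>x - (of_int r - \<theta>) / real n\<bar> \<le> \<psi>1 n - c0 * \<psi>2 n}
      \<subseteq> (\<lambda>j. (R j, q j)) ` {j. c0 \<le> c j} \<union>
        {(r, n). n \<ge> 1 \<and> n \<le> q 0 \<and> \<bar>x - (of_int r - \<theta>) / real n\<bar> \<le> \<psi>1 1}"
  proof
    fix z assume "z \<in> {(r, n). (n::nat) \<ge> 1 \<and> coprime (r::int) (int n) \<and>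
            \<bar>x - (of_int r - \<theta>) / real n\<bar> \<le> \<psi>1 n - c0 * \<psi>2 n}"
    then obtain r n where "z = (r, n)" "1 \<le> n" "coprime r (int n)"
      "\<bar>x - (of_int r - \<theta>) / real n\<bar> \<le> \<psi>1 n - c0 * \<psi>2 n"
      by blast
    with member[of n r] show "z \<in> (\<lambda>j. (R j, q j)) ` {j. c0 \<le> c j} \<union>
        {(r, n). n \<ge> 1 \<and> n \<le> q 0 \<and> \<bar>x - (of_int r - \<theta>) / real n\<bar> \<le> \<psi>1 1}"
      by (simp only: Un_iff mem_Collect_eq case_prod_conv) blast
  qed
  show ?thesis
    by (rule finite_subset[OF sub finite_UnI[OF finite_imageI[OF finite_levels]
          finite_approximations_bounded_denominator]])
qed

lemma infinite_close_approximations: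
  "infinite {(r, n). (n::nat) \<ge> 1 \<and> coprime (r::int) (int n) \<and>
      \<bar>x - (of_int r - \<theta>) / real n\<bar> \<le> \<psi>1 n}"
proof (cases "finite {j. \<not> int (q j) dvd R j}")
  case False
  have "(\<lambda>j. (R j, q j)) ` {j. \<not> int (q j) dvd R j} \<subseteq>
      {(r, n). n \<ge> 1 \<and> coprime r (int n) \<and> \<bar>x - (of_int r - \<theta>) / real n\<bar> \<le> \<psi>1 n}"
  proof (rule image_subsetI)
    fix j assume "j \<in> {j. \<not> int (q j) dvd R j}"
    then have "coprime (int (q j)) (R j)"
      using q_prime[of j] by (intro prime_imp_coprime) auto
    moreover have "q j \<ge> 1" using q_ge_N[of j] N by simp
    ultimately show "(R j, q j) \<in> {(r, n). n \<ge> 1 \<and> coprime r (int n) \<and>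
        \<bar>x - (of_int r - \<theta>) / real n\<bar> \<le> \<psi>1 n}"
      using level_close[of j] by (simp add: coprime_commute)
  qed
  moreover have "inj_on (\<lambda>j. (R j, q j)) {j. \<not> int (q j) dvd R j}"
    by (rule inj_onI) (simp add: strict_mono_eq[OF q_mono])
  then have "infinite ((\<lambda>j. (R j, q j)) ` {j. \<not> int (q j) dvd R j})"
    using False finite_imageD by blast
  ultimately show ?thesis using infinite_super by blast
next
  case True
  then obtain J where "{j. \<not> int (q j) dvd R j} \<subseteq> {..<J}"
    using finite_nat_bounded by blast
  then have J: "\<And>j. J \<le> j \<Longrightarrow> int (q j) dvd R j" by auto
  define q' where "q' j = q (j + J)" for j
  define n where "n j = R (j + J) div int (q' j)" for j
  have "R (j + J) = n j * int (q' j)" for j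
    using J[of "j + J"] by (simp add: n_def q'_def)
  then have R: "of_int (R (j + J)) = of_int (n j) * real (q' j)" for j
    by simp
  have shift: "(of_int (R (j + J)) - \<theta>) / real (q' j) = of_int (n j) - \<theta> / real (q' j)" for j
  proof -
    have "real (q' j) > 0" using q_ge_N[of "j + J"] N by (simp add: q'_def)
    then show ?thesis unfolding R by (simp add: field_simps)
  qed
  have False
  proof (rule integer_shift_approximations_absurd[where q = q' and n = n and x = x and \<theta> = \<theta> and \<eta> = \<eta>])
    show "strict_mono q'"
      using q_mono by (simp add: q'_def strict_mono_def)
    show "4 \<le> q' j" for j using q_ge_N[of "j + J"] N by (simp add: q'_def)
    show "0 < x - of_int (n j) + \<theta> / real (q' j)" for j
      using level_pos[of "j + J"] by (simp add: shift flip: q'_def)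
    show "x - of_int (n j) + \<theta> / real (q' j) \<le> real (q' j) powr (-1 - \<eta>)" for j
      using level_upper[of "j + J"] psi1_bound[OF q_ge_N[of "j + J"]]
      by (simp add: shift flip: q'_def)
  qed (use theta eta_pos in auto)
  then show ?thesis ..
qed

theorem in_Tight: "x \<in> Tight \<psi>1 \<psi>2 \<theta>"
  unfolding Tight_def using infinite_close_approximations finite_tight_approximations by simp

end

section \<open>Measures on the torus\<close>

lemma cos_2pi_shift_int: "cos (2 * pi * (t + of_int i)) = cos (2 * pi * t)"
proof -
  have "cos (2 * pi * (t + of_int i)) = cos (2 * pi * t + (2 * pi) * of_int i)"
    by (simp add: algebra_simps)
  then show ?thesis by (simp add: cos_add)
qed

lemma cos_2pi_less_iff_near_int:
  fixes e t :: real
  assumes e: "0 < e" "e \<le> 1/2"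
  shows "cos (2 * pi * e) < cos (2 * pi * t) \<longleftrightarrow> (\<exists>i::int. \<bar>t + of_int i\<bar> < e)"
proof -
  have reduce: "cos (2 * pi * t) = cos (2 * pi * \<bar>t + of_int i\<bar>)" for i :: int
  proof -
    have "cos (2 * pi * t) = cos \<bar>2 * pi * (t + of_int i)\<bar>"
      by (simp only: cos_abs_real cos_2pi_shift_int)
    also have "\<bar>2 * pi * (t + of_int i)\<bar> = 2 * pi * \<bar>t + of_int i\<bar>"
      by (simp add: abs_mult)
    finally show ?thesis .
  qed
  define i where "i = - \<lfloor>t + 1/2\<rfloor>"
  have i: "\<bar>t + of_int i\<bar> \<le> 1/2" unfolding i_def by linarith
  have less: "cos (2 * pi * e) < cos (2 * pi * s) \<longleftrightarrow> s < e" if "0 \<le> s" "s \<le> 1/2" for s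
    using that e by (subst cos_mono_less_eq) (auto simp: field_simps)
  show ?thesis
  proof
    assume "cos (2 * pi * e) < cos (2 * pi * t)"
    then have "\<bar>t + of_int i\<bar> < e" using less[of "\<bar>t + of_int i\<bar>"] i reduce[of i] by simp
    then show "\<exists>i::int. \<bar>t + of_int i\<bar> < e" ..
  next
    assume "\<exists>i::int. \<bar>t + of_int i\<bar> < e"
    then obtain k :: int where "\<bar>t + of_int k\<bar> < e" ..
    then show "cos (2 * pi * e) < cos (2 * pi * t)"
      using less[of "\<bar>t + of_int k\<bar>"] reduce[of k] e by simp
  qed
qed

definition torus_bump :: "real \<Rightarrow> real \<Rightarrow> real \<Rightarrow> real" where
  "torus_bump x e y = max 0 (cos (2 * pi * (y - x)) - cos (2 * pi * e))"

lemma torus_bump_nonzero_iff: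
  assumes "0 < e" "e \<le> 1/2"
  shows "torus_bump x e y \<noteq> 0 \<longleftrightarrow> (\<exists>i::int. \<bar>y + of_int i - x\<bar> < e)"
  using cos_2pi_less_iff_near_int[OF assms, of "y - x"]
  by (auto simp: torus_bump_def algebra_simps)

lemma torus_bump_nonneg: "torus_bump x e y \<ge> 0"
  by (simp add: torus_bump_def)

lemma torus_bump_le_2: "torus_bump x e y \<le> 2"
proof -
  have "cos (2 * pi * (y - x)) \<le> 1" "- 1 \<le> cos (2 * pi * e)" by simp_all
  then show ?thesis unfolding torus_bump_def max.bounded_iff by (intro conjI) linarith+
qed

lemma continuous_on_torus_bump: "continuous_on UNIV (torus_bump x e)"
  unfolding torus_bump_def by (intro continuous_intros)

lemma torus_bump_periodic: "torus_bump x e (y + 1) = torus_bump x e y"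
  using cos_2pi_shift_int[of "y - x" 1] by (simp add: torus_bump_def algebra_simps)

lemma integral_torus_bump_pos:
  assumes \<mu>: "torus_measure \<mu>" and x: "x \<in> torus_support \<mu>" and e: "0 < e" "e \<le> 1/2"
  shows "integral\<^sup>L \<mu> (torus_bump x e) \<noteq> 0"
proof
  assume zero: "integral\<^sup>L \<mu> (torus_bump x e) = 0"
  have sets: "sets \<mu> = sets borel" and fin: "finite_measure \<mu>"
    using \<mu> unfolding torus_measure_def by auto
  have meas: "torus_bump x e \<in> borel_measurable \<mu>"
    using borel_measurable_continuous_onI[OF continuous_on_torus_bump] measurable_cong_sets[OF sets refl]
    by blast
  have "integrable \<mu> (torus_bump x e)"
    using finite_measure.integrable_const_bound[OF fin, of "torus_bump x e" 2] meas
      torus_bump_nonneg torus_bump_le_2 by simp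
  then have "AE y in \<mu>. torus_bump x e y = 0"
    using integral_nonneg_eq_0_iff_AE zero torus_bump_nonneg by blast
  moreover have null_set: "{y \<in> space \<mu>. torus_bump x e y \<noteq> 0} \<in> sets \<mu>"
    using meas by measurable
  ultimately have "emeasure \<mu> {y \<in> space \<mu>. torus_bump x e y \<noteq> 0} = 0"
    using AE_iff_measurable[OF null_set] by auto
  moreover have "{y \<in> space \<mu>. torus_bump x e y \<noteq> 0} = {y. \<exists>i::int. \<bar>y + of_int i - x\<bar> < e}"
    using torus_bump_nonzero_iff[OF e] sets_eq_imp_space_eq[OF sets] by auto
  ultimately show False
    using x e unfolding torus_support_def by auto
qed

text \<open>y lies, up to an integer translation, in the support of one of the bumps phi_rq at scale M.\<close>
definition in_window :: "real \<Rightarrow> (nat \<Rightarrow> real) \<Rightarrow> (nat \<Rightarrow> real) \<Rightarrow> real \<Rightarrow> real \<Rightarrow> real \<Rightarrow> bool" where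
  "in_window \<theta> \<psi>1 \<psi>2 \<epsilon> M y \<longleftrightarrow>
     (\<exists>q r (m::int). prime q \<and> M \<le> real q \<and> real q < 2 * M \<and> r < q \<and>
        \<bar>y + of_int m - xqr \<theta> \<psi>1 \<psi>2 \<epsilon> M q r\<bar> \<le> cM \<epsilon> M * \<psi>2 q / 2)"

lemma fM_per_eq_0_outside_window:
  assumes M: "M > 0" and psi2: "\<And>q. q \<ge> 1 \<Longrightarrow> \<psi>2 q > 0"
    and phi: "\<And>x. \<bar>x\<bar> > 1/2 \<Longrightarrow> \<phi> x = 0"
    and y: "\<not> in_window \<theta> \<psi>1 \<psi>2 \<epsilon> M y"
  shows "fM_per \<phi> \<theta> \<psi>1 \<psi>2 \<epsilon> M y = 0"
proof -
  have "gM \<phi> \<theta> \<psi>1 \<psi>2 \<epsilon> M (y + of_int i) = 0" for i :: int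
    unfolding gM_def
  proof (intro sum.neutral ballI)
    fix q r assume q: "q \<in> {q::nat. prime q \<and> M \<le> real q \<and> real q < 2 * M}" and r: "r \<in> {..<q}"
    define w where "w = cM \<epsilon> M * \<psi>2 q"
    have "w > 0"
      using M psi2[of q] q prime_gt_0_nat[of q] by (simp add: w_def cM_def)
    moreover have "\<not> \<bar>y + of_int i - xqr \<theta> \<psi>1 \<psi>2 \<epsilon> M q r\<bar> \<le> w / 2"
      using y q r unfolding in_window_def w_def by auto
    ultimately have "\<bar>(y + of_int i - xqr \<theta> \<psi>1 \<psi>2 \<epsilon> M q r) / w\<bar> > 1/2"
      by (simp add: abs_divide field_simps)
    then show "phi_rq \<phi> \<theta> \<psi>1 \<psi>2 \<epsilon> M q r (y + of_int i) = 0"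
      unfolding phi_rq_def w_def[symmetric] using phi by simp
  qed
  then show ?thesis unfolding fM_per_def fM_def by simp
qed

lemma Mseq_pos: "M1 > 0 \<Longrightarrow> Mseq M1 \<beta> j > 0"
  by (induction j) auto

lemma mu_dens_eq_0_outside_window:
  assumes M1: "M1 > 0" and jk: "j < k" and psi2: "\<And>q. q \<ge> 1 \<Longrightarrow> \<psi>2 q > 0"
    and phi: "\<And>x. \<bar>x\<bar> > 1/2 \<Longrightarrow> \<phi> x = 0"
    and y: "\<not> in_window \<theta> \<psi>1 \<psi>2 \<epsilon> (Mseq M1 \<beta> j) y"
  shows "mu_dens \<phi> \<theta> \<psi>1 \<psi>2 \<epsilon> \<beta> M1 k y = 0"
proof -
  have "fM_per \<phi> \<theta> \<psi>1 \<psi>2 \<epsilon> (Mseq M1 \<beta> j) y = 0"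
    by (rule fM_per_eq_0_outside_window[OF Mseq_pos[OF M1] psi2 phi y])
  then show ?thesis
    unfolding mu_dens_def using jk by (intro prod_zero) auto
qed

text \<open>Only finitely many windows meet a period, and each is closed, so a point outside all of
  them has a neighbourhood (modulo 1) outside all of them.\<close>
lemma not_in_window_open:
  assumes M: "M > 0" and x: "\<not> in_window \<theta> \<psi>1 \<psi>2 \<epsilon> M x"
  obtains e where "0 < e" "e \<le> 1/2"
    "\<And>y. (\<exists>i::int. \<bar>y + of_int i - x\<bar> < e) \<Longrightarrow> \<not> in_window \<theta> \<psi>1 \<psi>2 \<epsilon> M y"
proof -
  define I where "I = {(q, r). prime q \<and> M \<le> real q \<and> real q < 2 * M \<and> r < q}"
  have "I \<subseteq> {..nat \<lceil>2 * M\<rceil>} \<times> {..nat \<lceil>2 * M\<rceil>}"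
  proof
    fix z assume "z \<in> I"
    then obtain q r where "z = (q, r)" "real q < 2 * M" "r < q" by (auto simp: I_def)
    moreover from this have "q \<le> nat \<lceil>2 * M\<rceil>" by linarith
    ultimately show "z \<in> {..nat \<lceil>2 * M\<rceil>} \<times> {..nat \<lceil>2 * M\<rceil>}" by simp
  qed
  then have "finite I" by (rule finite_subset) simp
  define c where "c q r = xqr \<theta> \<psi>1 \<psi>2 \<epsilon> M q r" for q r
  define w where "w q = cM \<epsilon> M * \<psi>2 q / 2" for q
  define m where "m q r = \<lfloor>c q r - x\<rfloor>" for q r
  define f where "f z = min (c (fst z) (snd z) - x - m (fst z) (snd z) - w (fst z))
                            (x + m (fst z) (snd z) + 1 - c (fst z) (snd z) - w (fst z))" for z
  have "0 < f z" if "z \<in> I" for z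
  proof -
    obtain q r where z: "z = (q, r)" by (cases z)
    have "\<not> \<bar>x + of_int (m q r) - c q r\<bar> \<le> w q" "\<not> \<bar>x + of_int (m q r + 1) - c q r\<bar> \<le> w q"
      using x that z unfolding in_window_def I_def c_def w_def by blast+
    moreover have "of_int (m q r) \<le> c q r - x" "c q r - x < of_int (m q r) + 1"
      unfolding m_def by linarith+
    ultimately show "0 < f z" unfolding f_def z by auto
  qed
  then obtain \<kappa> where \<kappa>: "\<kappa> > 0" "\<And>z. z \<in> I \<Longrightarrow> \<kappa> \<le> f z"
    using finite_pos_lower_bound[OF \<open>finite I\<close>] by blast
  show thesis
  proof (rule that[of "min (1/2) \<kappa>"])
    show "0 < min (1/2) \<kappa>" "min (1/2) \<kappa> \<le> 1/2" using \<kappa> by auto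
    fix y assume "\<exists>i::int. \<bar>y + of_int i - x\<bar> < min (1/2) \<kappa>"
    then obtain i :: int where i: "\<bar>y + of_int i - x\<bar> < \<kappa>" by auto
    show "\<not> in_window \<theta> \<psi>1 \<psi>2 \<epsilon> M y"
    proof
      assume "in_window \<theta> \<psi>1 \<psi>2 \<epsilon> M y"
      then obtain q r and k :: int where qr: "(q, r) \<in> I"
        and close: "\<bar>y + of_int k - c q r\<bar> \<le> w q"
        unfolding in_window_def I_def c_def w_def by blast
      have fk: "\<kappa> \<le> f (q, r)" using \<kappa>(2)[OF qr] .
      have "of_int (m q r) \<le> c q r - x" "c q r - x < of_int (m q r) + 1"
        unfolding m_def by linarith+
      show False
      proof (cases "k - i \<le> m q r")
        case True
        then have "real_of_int (k - i) \<le> of_int (m q r)" by linarith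
        then have "c q r - x - of_int (k - i) \<ge> w q + \<kappa>" using fk unfolding f_def by auto
        then show False using close i by (simp add: abs_le_iff abs_less_iff; linarith)
      next
        case False
        then have "real_of_int (k - i) \<ge> of_int (m q r) + 1" by linarith
        then have "x + of_int (k - i) - c q r \<ge> w q + \<kappa>" using fk unfolding f_def by auto
        then show False using close i by (simp add: abs_le_iff abs_less_iff; linarith)
      qed
    qed
  qed
qed

lemma torus_support_in_window:
  assumes \<mu>: "torus_measure \<mu>" and k: "strict_mono k"
    and lim: "torus_weak_star_lim (\<lambda>n. mu_dens \<phi> \<theta> \<psi>1 \<psi>2 \<epsilon> \<beta> M1 (k n)) \<mu>"
    and M1: "M1 > 0" and psi2: "\<And>q. q \<ge> 1 \<Longrightarrow> \<psi>2 q > 0"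
    and phi: "\<And>x. \<bar>x\<bar> > 1/2 \<Longrightarrow> \<phi> x = 0"
    and x: "x \<in> torus_support \<mu>"
  shows "in_window \<theta> \<psi>1 \<psi>2 \<epsilon> (Mseq M1 \<beta> j) x"
proof (rule ccontr)
  assume "\<not> in_window \<theta> \<psi>1 \<psi>2 \<epsilon> (Mseq M1 \<beta> j) x"
  then obtain e where e: "0 < e" "e \<le> 1/2"
    and outside: "\<And>y. (\<exists>i::int. \<bar>y + of_int i - x\<bar> < e) \<Longrightarrow> \<not> in_window \<theta> \<psi>1 \<psi>2 \<epsilon> (Mseq M1 \<beta> j) y"
    using not_in_window_open[OF Mseq_pos[OF M1]] by blast
  define h where "h = torus_bump x e"
  have vanish: "h y * mu_dens \<phi> \<theta> \<psi>1 \<psi>2 \<epsilon> \<beta> M1 (k n) y = 0" if "n > j" for n y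
  proof (cases "h y = 0")
    case False
    then have "\<not> in_window \<theta> \<psi>1 \<psi>2 \<epsilon> (Mseq M1 \<beta> j) y"
      using outside torus_bump_nonzero_iff[OF e] by (simp add: h_def)
    moreover have "j < k n" using seq_suble[OF k, of n] that by simp
    ultimately show ?thesis
      using mu_dens_eq_0_outside_window[OF M1 _ psi2 phi] by simp
  qed simp
  have "(\<lambda>n. LINT y:{0..<1}|lborel. h y * mu_dens \<phi> \<theta> \<psi>1 \<psi>2 \<epsilon> \<beta> M1 (k n) y) \<longlonglongrightarrow> integral\<^sup>L \<mu> h"
    using lim continuous_on_torus_bump torus_bump_periodic
    unfolding torus_weak_star_lim_def h_def by blast
  moreover have "eventually (\<lambda>n. (LINT y:{0..<1}|lborel. h y * mu_dens \<phi> \<theta> \<psi>1 \<psi>2 \<epsilon> \<beta> M1 (k n) y) = 0)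
      sequentially"
    using eventually_gt_at_top[of j] by eventually_elim (simp add: vanish)
  then have "(\<lambda>n. LINT y:{0..<1}|lborel. h y * mu_dens \<phi> \<theta> \<psi>1 \<psi>2 \<epsilon> \<beta> M1 (k n) y) \<longlonglongrightarrow> 0"
    by (rule tendsto_eventually)
  ultimately have "integral\<^sup>L \<mu> h = 0"
    by (rule LIMSEQ_unique)
  then show False
    using integral_torus_bump_pos[OF \<mu> x e] by (simp add: h_def)
qed

section \<open>Windows at the scales M_j\<close>

lemma powr_ge_double: "2 \<le> (M::real) \<Longrightarrow> 2 \<le> \<beta> \<Longrightarrow> 2 * M \<le> M powr \<beta>"
proof -
  assume M: "2 \<le> M" and \<beta>: "2 \<le> \<beta>"
  have "2 * M \<le> M * M" using M by (intro mult_right_mono) auto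
  also have "\<dots> = M powr 2" using M by (simp add: power2_eq_square)
  also have "\<dots> \<le> M powr \<beta>" using M \<beta> by (intro powr_mono) auto
  finally show ?thesis .
qed

lemma Mseq_ge_2: "2 \<le> M1 \<Longrightarrow> 2 \<le> \<beta> \<Longrightarrow> 2 \<le> Mseq M1 \<beta> j"
  by (induction j) (auto intro: order_trans[OF _ powr_ge_double])

lemma Mseq_Suc_ge_double: "2 \<le> M1 \<Longrightarrow> 2 \<le> \<beta> \<Longrightarrow> 2 * Mseq M1 \<beta> j \<le> Mseq M1 \<beta> (Suc j)"
  by (simp add: Mseq_ge_2 powr_ge_double)

lemma Mseq_ge_add: "2 \<le> M1 \<Longrightarrow> 2 \<le> \<beta> \<Longrightarrow> M1 + real j \<le> Mseq M1 \<beta> j"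
proof (induction j)
  case (Suc j)
  then show ?case
    using Mseq_Suc_ge_double[of M1 \<beta> j] Mseq_ge_2[of M1 \<beta> j] by simp
qed simp

lemma filterlim_Mseq_at_top: "2 \<le> M1 \<Longrightarrow> 2 \<le> \<beta> \<Longrightarrow> filterlim (Mseq M1 \<beta>) at_top sequentially"
proof (rule filterlim_at_top_mono[OF filterlim_real_sequentially])
  assume "2 \<le> M1" "2 \<le> \<beta>"
  then have "real j \<le> Mseq M1 \<beta> j" for j using Mseq_ge_add[of M1 \<beta> j] by simp
  then show "\<forall>\<^sub>F j in sequentially. real j \<le> Mseq M1 \<beta> j" by (simp add: always_eventually)
qed

lemma ln_le_of_le_double_powr:
  fixes a b c \<beta> :: real
  assumes "0 < a" "a \<le> b" "0 < c" "c \<le> 2 * a powr \<beta>" "0 \<le> \<beta>"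
  shows "ln c \<le> ln 2 + \<beta> * ln b"
proof -
  have "c \<le> 2 * b powr \<beta>"
    using assms by (meson order_trans mult_left_mono powr_mono2 zero_le_numeral less_imp_le)
  then have "ln c \<le> ln (2 * b powr \<beta>)" using assms by simp
  also have "\<dots> = ln 2 + \<beta> * ln b" using assms by (simp add: ln_mult ln_powr)
  finally show ?thesis .
qed

lemma in_window_approximation:
  assumes "in_window \<theta> \<psi>1 \<psi>2 \<epsilon> M x" "M > 0"
  obtains q :: nat and R :: int where "prime q" "M \<le> real q" "real q < 2 * M"
    "\<psi>1 q - cM \<epsilon> M * \<psi>2 q \<le> x - (of_int R - \<theta>) / real q" "x - (of_int R - \<theta>) / real q \<le> \<psi>1 q"
proof -
  obtain q r and m :: int where q: "prime q" "M \<le> real q" "real q < 2 * M"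
    and close: "\<bar>x + of_int m - xqr \<theta> \<psi>1 \<psi>2 \<epsilon> M q r\<bar> \<le> cM \<epsilon> M * \<psi>2 q / 2"
    using assms(1) unfolding in_window_def by blast
  define R where "R = int r - m * int q"
  have "x - (of_int R - \<theta>) / real q =
      (x + of_int m - xqr \<theta> \<psi>1 \<psi>2 \<epsilon> M q r) + \<psi>1 q - cM \<epsilon> M / 2 * \<psi>2 q"
    using q(2) assms(2) by (simp add: R_def xqr_def field_simps)
  with close have "\<psi>1 q - cM \<epsilon> M * \<psi>2 q \<le> x - (of_int R - \<theta>) / real q"
    "x - (of_int R - \<theta>) / real q \<le> \<psi>1 q"
    unfolding abs_le_iff by linarith+
  with q show thesis using that by blast
qed

lemma Tight_of_windows:
  fixes x \<theta> \<epsilon> \<beta> g \<kappa> \<eta> M1 :: real and \<psi>1 \<psi>2 :: "nat \<Rightarrow> real" and N :: nat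
  assumes theta: "\<theta> = 0 \<or> \<theta> \<notin> \<rat>" "0 \<le> \<theta>" "\<theta> < 1"
    and psi2_pos: "\<And>n. n \<ge> 1 \<Longrightarrow> \<psi>2 n > 0"
    and psi_le: "\<And>n. n \<ge> 1 \<Longrightarrow> \<psi>2 n \<le> \<psi>1 n"
    and psi1_dec: "\<And>n n'. 1 \<le> n \<Longrightarrow> n \<le> n' \<Longrightarrow> \<psi>1 n' \<le> \<psi>1 n"
    and psi1_bound: "\<And>n. N \<le> n \<Longrightarrow> \<psi>1 n \<le> real n powr (-1 - \<eta>)"
    and sep: "linear_form_bound \<theta> g \<kappa>" and kappa_pos: "\<kappa> > 0"
    and N: "N \<ge> 4" and eta_pos: "\<eta> > 0" and g_pos: "g > 0"
    and exponent_gap: "\<eta>\<^sup>2 - g\<^sup>2 * \<beta> > 0" and \<beta>: "\<beta> \<ge> 2" and \<epsilon>: "\<epsilon> > 0"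
    and M1: "real N \<le> M1"
    and M1_large: "(\<eta>\<^sup>2 - g\<^sup>2 * \<beta>) * ln M1 > (\<eta> + g) * (ln 2 - ln \<kappa>) + g\<^sup>2 * ln 2"
    and windows: "\<And>j. in_window \<theta> \<psi>1 \<psi>2 \<epsilon> (Mseq M1 \<beta> j) x"
  shows "x \<in> Tight \<psi>1 \<psi>2 \<theta>"
proof -
  define M where "M = Mseq M1 \<beta>"
  have M1_2: "2 \<le> M1" using M1 N by simp
  have M_gt_1: "1 < M j" for j using Mseq_ge_2[OF M1_2 \<beta>, of j] by (simp add: M_def)
  have "\<exists>q R. prime q \<and> M j \<le> real q \<and> real q < 2 * M j \<and>
      \<psi>1 q - cM \<epsilon> (M j) * \<psi>2 q \<le> x - (of_int R - \<theta>) / real q \<and>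
      x - (of_int R - \<theta>) / real q \<le> \<psi>1 q" for j
  proof -
    have "in_window \<theta> \<psi>1 \<psi>2 \<epsilon> (M j) x" "M j > 0"
      using windows M_gt_1[of j] by (simp_all add: M_def)
    then obtain q R where "prime q" "M j \<le> real q" "real q < 2 * M j"
      "\<psi>1 q - cM \<epsilon> (M j) * \<psi>2 q \<le> x - (of_int R - \<theta>) / real q" "x - (of_int R - \<theta>) / real q \<le> \<psi>1 q"
      by (rule in_window_approximation)
    then show ?thesis by blast
  qed
  then obtain q R where W: "\<And>j. prime (q j) \<and> M j \<le> real (q j) \<and> real (q j) < 2 * M j \<and>
      \<psi>1 (q j) - cM \<epsilon> (M j) * \<psi>2 (q j) \<le> x - (of_int (R j) - \<theta>) / real (q j) \<and>
      x - (of_int (R j) - \<theta>) / real (q j) \<le> \<psi>1 (q j)"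
    by metis
  have q_pos: "real (q j) > 0" for j using M_gt_1[of j] W[of j] by linarith
  have q_grow: "real (q j) < real (q (Suc j))" for j
  proof -
    have "real (q j) < 2 * M j" using W by blast
    also have "\<dots> \<le> M (Suc j)" using Mseq_Suc_ge_double[OF M1_2 \<beta>] by (simp add: M_def)
    also have "\<dots> \<le> real (q (Suc j))" using W by blast
    finally show ?thesis .
  qed
  interpret approximation_chain \<theta> \<psi>1 \<psi>2 x q R "\<lambda>j. cM \<epsilon> (M j)" g \<kappa> \<eta> \<beta> N
  proof
    show "strict_mono q" using q_grow by (simp add: strict_mono_Suc_iff)
    show "prime (q j)" for j using W by blast
    show "N \<le> q 0" using M1 W[of 0] by (simp add: M_def)
    show "(\<eta> + g) * (ln 2 - ln \<kappa>) + g\<^sup>2 * ln 2 < (\<eta>\<^sup>2 - g\<^sup>2 * \<beta>) * ln (real (q 0))"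
    proof -
      have "ln M1 \<le> ln (real (q 0))" using W[of 0] M1_2 by (simp add: M_def)
      then have "(\<eta>\<^sup>2 - g\<^sup>2 * \<beta>) * ln M1 \<le> (\<eta>\<^sup>2 - g\<^sup>2 * \<beta>) * ln (real (q 0))"
        using exponent_gap by (intro mult_left_mono) simp_all
      with M1_large show ?thesis by linarith
    qed
    show "ln (real (q (Suc j))) \<le> ln 2 + \<beta> * ln (real (q j))" for j
      using W[of j] W[of "Suc j"] M_gt_1[of j] q_pos[of "Suc j"] \<beta>
      by (intro ln_le_of_le_double_powr[of "M j"]) (simp_all add: M_def)
    show "cM \<epsilon> (M j) < 1" for j
      using M_gt_1[of j] \<epsilon> by (simp add: cM_def powr_less_one)
    show "(\<lambda>j. cM \<epsilon> (M j)) \<longlonglongrightarrow> 0"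
      unfolding cM_def using \<epsilon> filterlim_Mseq_at_top[OF M1_2 \<beta>]
      by (intro tendsto_neg_powr) (simp_all add: M_def)
    show "\<psi>1 (q j) - cM \<epsilon> (M j) * \<psi>2 (q j) \<le> x - (of_int (R j) - \<theta>) / real (q j)"
      "x - (of_int (R j) - \<theta>) / real (q j) \<le> \<psi>1 (q j)" for j
      using W[of j] by simp_all
  qed (use assms in auto)
  show ?thesis by (rule in_Tight)
qed

section \<open>Choice of the parameters\<close>

lemma decay_exponent_nonneg:
  fixes \<psi> :: "nat \<Rightarrow> real"
  assumes pos: "\<And>n. n \<ge> 1 \<Longrightarrow> \<psi> n > 0"
    and dec: "\<And>n n'. 1 \<le> n \<Longrightarrow> n \<le> n' \<Longrightarrow> \<psi> n' \<le> \<psi> n"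
    and lim: "((\<lambda>n. - ln (\<psi> n) / ln (real n)) \<longlongrightarrow> \<tau>) sequentially"
  shows "\<tau> \<ge> 0"
proof -
  have "((\<lambda>n. - ln (\<psi> 1) / ln (real n)) \<longlongrightarrow> 0) sequentially"
    by (intro tendsto_divide_0[OF tendsto_const] filterlim_at_top_imp_at_infinity
        filterlim_compose[OF ln_at_top filterlim_real_sequentially])
  moreover have "eventually (\<lambda>n. - ln (\<psi> 1) / ln (real n) \<le> - ln (\<psi> n) / ln (real n)) sequentially"
    using eventually_ge_at_top[of "2::nat"]
  proof eventually_elim
    case (elim n)
    then have "ln (\<psi> n) \<le> ln (\<psi> 1)" using dec[of 1 n] pos[of n] by simp
    then show ?case using elim by (intro divide_right_mono) auto
  qed
  ultimately show ?thesis using tendsto_le[OF sequentially_bot lim] by blast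
qed

lemma decay_exponent_powr_bound:
  fixes \<psi> :: "nat \<Rightarrow> real"
  assumes pos: "\<And>n. n \<ge> 1 \<Longrightarrow> \<psi> n > 0"
    and lim: "((\<lambda>n. - ln (\<psi> n) / ln (real n)) \<longlongrightarrow> \<tau>) sequentially" and "\<sigma> < \<tau>"
  obtains N where "\<And>n. N \<le> n \<Longrightarrow> \<psi> n \<le> real n powr (- \<sigma>)"
proof -
  obtain N where N: "\<And>n. N \<le> n \<Longrightarrow> \<sigma> < - ln (\<psi> n) / ln (real n)"
    using order_tendstoD(1)[OF lim \<open>\<sigma> < \<tau>\<close>] unfolding eventually_sequentially by blast
  have "\<psi> n \<le> real n powr (- \<sigma>)" if "max N 2 \<le> n" for n
  proof -
    have "ln (real n) > 0" using that by simp
    then have "\<sigma> * ln (real n) < - ln (\<psi> n)"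
      using N[of n] that pos_less_divide_eq[of "ln (real n)" \<sigma> "- ln (\<psi> n)"] by simp
    then have "ln (\<psi> n) < ln (real n powr (- \<sigma>))" using that by (simp add: ln_powr)
    then show ?thesis using pos[of n] that by (subst (asm) ln_less_cancel_iff) auto
  qed
  then show thesis by (rule that)
qed

lemma exponent_choice:
  fixes a \<gamma> \<beta> \<epsilon> :: real
  assumes \<gamma>: "\<gamma> \<ge> 1" and a: "a \<ge> -1" and \<beta>: "\<beta> > 2" and \<epsilon>: "\<epsilon> > 0"
    and \<beta>_def: "\<beta> * \<gamma>\<^sup>2 = a\<^sup>2 - \<epsilon> * \<gamma>\<^sup>2"
  obtains \<delta> where "0 < \<delta>" "\<delta> < a" "\<And>g. 0 < g \<Longrightarrow> g \<le> \<gamma> + \<delta> \<Longrightarrow> g\<^sup>2 * \<beta> < (a - \<delta>)\<^sup>2"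
proof -
  have "1 \<le> \<gamma>\<^sup>2" using \<gamma> by (simp add: one_le_power)
  then have "2 < a\<^sup>2" using \<beta>_def \<beta> \<epsilon> mult_left_mono[of 1 "\<gamma>\<^sup>2" "\<beta> + \<epsilon>"]
    by (simp add: algebra_simps)
  then have a1: "a > 1" using a abs_square_le_1[of a] by (cases "\<bar>a\<bar> \<le> 1") auto
  define D where "D = 2 * a + \<beta> * (2 * \<gamma> + 1)"
  have D: "D > 0" unfolding D_def using a1 \<beta> \<gamma> by (simp add: add_pos_pos)
  define \<delta> where "\<delta> = min (min 1 (a / 2)) (\<epsilon> * \<gamma>\<^sup>2 / (2 * D))"
  have \<delta>: "0 < \<delta>" "\<delta> \<le> 1" "\<delta> \<le> a / 2"
    unfolding \<delta>_def using a1 \<epsilon> \<gamma> D by auto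
  have "\<delta> * D \<le> \<epsilon> * \<gamma>\<^sup>2 / 2"
    using mult_right_mono[of \<delta> "\<epsilon> * \<gamma>\<^sup>2 / (2 * D)" D] D by (simp add: \<delta>_def)
  moreover have "2 * a * \<delta> + \<beta> * (2 * \<gamma> + 1) * \<delta> = \<delta> * D"
    by (simp add: D_def algebra_simps)
  moreover have "0 < \<epsilon> * \<gamma>\<^sup>2" using \<epsilon> \<gamma> by simp
  ultimately have small: "2 * a * \<delta> + \<beta> * (2 * \<gamma> + 1) * \<delta> < \<epsilon> * \<gamma>\<^sup>2"
    by linarith
  show thesis
  proof (rule that[OF \<delta>(1)])
    show "\<delta> < a" using \<delta>(3) a1 by simp
    fix g assume g: "0 < g" "g \<le> \<gamma> + \<delta>"
    have "g\<^sup>2 \<le> (\<gamma> + \<delta>)\<^sup>2" using g by (intro power_mono) auto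
    also have "\<dots> \<le> \<gamma>\<^sup>2 + (2 * \<gamma> + 1) * \<delta>"
      using \<delta> mult_left_le_one_le[of \<delta> \<delta>] by (simp add: power2_eq_square algebra_simps)
    finally have "g\<^sup>2 * \<beta> \<le> (\<gamma>\<^sup>2 + (2 * \<gamma> + 1) * \<delta>) * \<beta>"
      using \<beta> by (intro mult_right_mono) auto
    also have "\<dots> = a\<^sup>2 - \<epsilon> * \<gamma>\<^sup>2 + \<beta> * (2 * \<gamma> + 1) * \<delta>"
      using \<beta>_def by (simp add: algebra_simps)
    also have "\<dots> < a\<^sup>2 - 2 * a * \<delta>" using small by simp
    also have "\<dots> \<le> (a - \<delta>)\<^sup>2" by (simp add: power2_eq_square algebra_simps)
    finally show "g\<^sup>2 * \<beta> < (a - \<delta>)\<^sup>2" .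
  qed
qed

lemma theta_linear_form_bound:
  assumes theta_gamma: "(\<theta> = 0 \<and> \<gamma> = 1) \<or> (\<theta> \<notin> \<rat> \<and> dioph_good \<theta> \<noteq> {} \<and> \<gamma> = dioph_exp \<theta>)"
    and \<delta>: "\<delta> > 0"
  obtains g \<kappa> where "1 \<le> g" "g \<le> \<gamma> + \<delta>" "\<kappa> > 0" "linear_form_bound \<theta> g \<kappa>"
proof (cases "\<theta> = 0 \<and> \<gamma> = 1")
  case True
  then show thesis using that[of 1 1] linear_form_bound_zero[of 1] \<delta> by simp
next
  case False
  with theta_gamma have irr: "\<theta> \<notin> \<rat>" and ne: "dioph_good \<theta> \<noteq> {}" and \<gamma>: "\<gamma> = dioph_exp \<theta>"
    by auto
  have "Inf (dioph_good \<theta>) < \<gamma> + \<delta>" using \<gamma> \<delta> by (simp add: dioph_exp_def)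
  then obtain g where g: "g \<in> dioph_good \<theta>" "g < \<gamma> + \<delta>" using cInf_lessD[OF ne] by blast
  obtain \<kappa> where "\<kappa> > 0" "linear_form_bound \<theta> g \<kappa>"
    using irrational_linear_form_bound[OF irr g(1)] by blast
  with g dioph_good_gt_1[OF g(1)] show thesis using that[of g \<kappa>] by simp
qed

lemma exp_le_imp_mult_ln_gt: "(\<Delta>::real) > 0 \<Longrightarrow> exp (C / \<Delta> + 1) \<le> M \<Longrightarrow> C < \<Delta> * ln M"
proof -
  assume \<Delta>: "\<Delta> > 0" and M: "exp (C / \<Delta> + 1) \<le> M"
  then have "C / \<Delta> + 1 \<le> ln M"
    using exp_gt_zero[of "C / \<Delta> + 1"] by (subst ln_exp[symmetric]) (simp only: ln_le_cancel_iff)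
  then have "C + \<Delta> \<le> \<Delta> * ln M"
    using \<Delta> mult_left_mono[of "C / \<Delta> + 1" "ln M" \<Delta>] by (simp add: field_simps)
  with \<Delta> show ?thesis by linarith
qed

lemma gap_exponents:
  fixes \<psi>1 :: "nat \<Rightarrow> real"
  assumes theta_gamma: "(\<theta> = 0 \<and> \<gamma> = 1) \<or> (\<theta> \<notin> \<rat> \<and> dioph_good \<theta> \<noteq> {} \<and> \<gamma> = dioph_exp \<theta>)"
    and psi1_pos: "\<And>n. n \<ge> 1 \<Longrightarrow> \<psi>1 n > 0"
    and psi1_dec: "\<And>n n'. 1 \<le> n \<Longrightarrow> n \<le> n' \<Longrightarrow> \<psi>1 n' \<le> \<psi>1 n"
    and tau1: "((\<lambda>n. - ln (\<psi>1 n) / ln (real n)) \<longlongrightarrow> \<tau>1) sequentially"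
    and \<beta>: "\<beta> = (\<tau>1 - 1)\<^sup>2 / \<gamma>\<^sup>2 - \<epsilon>" "\<beta> > 2" and \<epsilon>: "\<epsilon> > 0"
  obtains N \<eta> g \<kappa> where "\<And>n. N \<le> n \<Longrightarrow> \<psi>1 n \<le> real n powr (-1 - \<eta>)"
    "linear_form_bound \<theta> g \<kappa>" "\<kappa> > 0" "N \<ge> 4" "\<eta> > 0" "g > 0" "\<eta>\<^sup>2 - g\<^sup>2 * \<beta> > 0"
proof -
  have \<gamma>: "\<gamma> \<ge> 1" using theta_gamma dioph_exp_ge_1 by auto
  have "\<tau>1 - 1 \<ge> -1" using decay_exponent_nonneg[OF psi1_pos psi1_dec tau1] by simp
  moreover have "\<beta> * \<gamma>\<^sup>2 = (\<tau>1 - 1)\<^sup>2 - \<epsilon> * \<gamma>\<^sup>2" using \<gamma> by (simp add: \<beta>(1) field_simps)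
  ultimately obtain \<delta> where \<delta>: "0 < \<delta>" "\<delta> < \<tau>1 - 1"
    and gap: "\<And>g. 0 < g \<Longrightarrow> g \<le> \<gamma> + \<delta> \<Longrightarrow> g\<^sup>2 * \<beta> < (\<tau>1 - 1 - \<delta>)\<^sup>2"
    using exponent_choice[OF \<gamma> _ \<beta>(2) \<epsilon>] by blast
  obtain g \<kappa> where g: "1 \<le> g" "g \<le> \<gamma> + \<delta>" and \<kappa>: "\<kappa> > 0" "linear_form_bound \<theta> g \<kappa>"
    using theta_linear_form_bound[OF theta_gamma \<delta>(1)] by blast
  obtain N where N: "\<And>n. N \<le> n \<Longrightarrow> \<psi>1 n \<le> real n powr (- (1 + (\<tau>1 - 1 - \<delta>)))"
    using decay_exponent_powr_bound[OF psi1_pos tau1, of "1 + (\<tau>1 - 1 - \<delta>)"] \<delta>(1) by auto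
  show thesis
  proof (rule that[OF _ \<kappa>(2,1), of "max N 4" "\<tau>1 - 1 - \<delta>"])
    show "\<psi>1 n \<le> real n powr (-1 - (\<tau>1 - 1 - \<delta>))" if "max N 4 \<le> n" for n
      using N[of n] that by (simp add: algebra_simps)
  qed (use g \<delta> gap[of g] in auto)
qed

theorem lemma9:
  fixes \<theta> \<gamma> \<epsilon> \<tau>1 \<tau>2 :: real
    and \<psi>1 \<psi>2 :: "nat \<Rightarrow> real"
    and \<phi> :: "real \<Rightarrow> real"
  defines "\<beta> \<equiv> (\<tau>1 - 1)\<^sup>2 / \<gamma>\<^sup>2 - \<epsilon>"
  assumes theta_range: "0 \<le> \<theta>" "\<theta> < 1"
    and theta_gamma: "(\<theta> = 0 \<and> \<gamma> = 1) \<or>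
          (\<theta> \<notin> \<rat> \<and> dioph_good \<theta> \<noteq> {} \<and> \<gamma> = dioph_exp \<theta>)"
    and psi_pos: "\<And>q. q \<ge> 1 \<Longrightarrow> \<psi>1 q > 0" "\<And>q. q \<ge> 1 \<Longrightarrow> \<psi>2 q > 0"
    and psi_le: "\<And>q. q \<ge> 1 \<Longrightarrow> \<psi>2 q \<le> \<psi>1 q"
    and psi1_dec: "\<And>q q'. 1 \<le> q \<Longrightarrow> q \<le> q' \<Longrightarrow> \<psi>1 q' \<le> \<psi>1 q"
    and psi2_dec: "\<And>q q'. 1 \<le> q \<Longrightarrow> q \<le> q' \<Longrightarrow> \<psi>2 q' \<le> \<psi>2 q"
    and diff_dec: "\<And>q q'. 1 \<le> q \<Longrightarrow> q \<le> q' \<Longrightarrow> \<psi>1 q' - \<psi>2 q' \<le> \<psi>1 q - \<psi>2 q"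
    and tau1: "((\<lambda>q. - ln (\<psi>1 q) / ln (real q)) \<longlongrightarrow> \<tau>1) sequentially"
    and tau2: "((\<lambda>q. - ln (\<psi>2 q) / ln (real q)) \<longlongrightarrow> \<tau>2) sequentially"
    and eps_pos: "\<epsilon> > 0"
    and phi_nonneg: "\<And>x. \<phi> x \<ge> 0"
    and phi_nonzero: "\<exists>x. \<phi> x \<noteq> 0"
    and phi_smooth: "smooth_fun \<phi>"
    and phi_supp: "\<And>x. \<bar>x\<bar> > 1/2 \<Longrightarrow> \<phi> x = 0"
    and phi_fourier: "\<exists>C R. \<forall>\<xi>. \<bar>\<xi>\<bar> \<ge> R \<longrightarrow> norm (fourier \<phi> \<xi>) \<le> C * exp (- (\<bar>\<xi>\<bar> powr (3/4)))"
    and beta_gt: "\<beta> > \<tau>2"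
    and tau2_ge: "\<tau>2 \<ge> 2"
  shows "\<exists>M0. \<forall>M1 \<ge> M0. \<forall>(\<mu>::real measure) (k::nat \<Rightarrow> nat).
           torus_measure \<mu> \<longrightarrow> strict_mono k \<longrightarrow>
           torus_weak_star_lim (\<lambda>n. mu_dens \<phi> \<theta> \<psi>1 \<psi>2 \<epsilon> \<beta> M1 (k n)) \<mu> \<longrightarrow>
           torus_support \<mu> \<subseteq> Tight \<psi>1 \<psi>2 \<theta>"
proof -
  have theta: "\<theta> = 0 \<or> \<theta> \<notin> \<rat>" using theta_gamma by auto
  have \<beta>2: "\<beta> > 2" using beta_gt tau2_ge by simp
  obtain N \<eta> g \<kappa> where params: "\<And>n. N \<le> n \<Longrightarrow> \<psi>1 n \<le> real n powr (-1 - \<eta>)"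
      "linear_form_bound \<theta> g \<kappa>" "\<kappa> > 0" "N \<ge> 4" "\<eta> > 0" "g > 0" "\<eta>\<^sup>2 - g\<^sup>2 * \<beta> > 0"
    using gap_exponents[OF theta_gamma psi_pos(1) psi1_dec tau1 meta_eq_to_obj_eq[OF \<beta>_def] \<beta>2 eps_pos]
    by blast
  define C where "C = (\<eta> + g) * (ln 2 - ln \<kappa>) + g\<^sup>2 * ln 2"
  show ?thesis
  proof (intro exI[of _ "max (real N) (exp (C / (\<eta>\<^sup>2 - g\<^sup>2 * \<beta>) + 1))"] allI impI subsetI)
    fix M1 \<mu> k x
    assume M1: "max (real N) (exp (C / (\<eta>\<^sup>2 - g\<^sup>2 * \<beta>) + 1)) \<le> M1" and \<mu>: "torus_measure \<mu>"
      and k: "strict_mono k" and lim: "torus_weak_star_lim (\<lambda>n. mu_dens \<phi> \<theta> \<psi>1 \<psi>2 \<epsilon> \<beta> M1 (k n)) \<mu>"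
      and x: "x \<in> torus_support \<mu>"
    have "real N \<le> M1" using M1 by simp
    then have "M1 > 0" using params(4) by linarith
    show "x \<in> Tight \<psi>1 \<psi>2 \<theta>"
    proof (rule Tight_of_windows[OF theta theta_range psi_pos(2) psi_le psi1_dec params])
      show "in_window \<theta> \<psi>1 \<psi>2 \<epsilon> (Mseq M1 \<beta> j) x" for j
        by (rule torus_support_in_window[OF \<mu> k lim \<open>M1 > 0\<close> psi_pos(2) phi_supp x])
      show "(\<eta> + g) * (ln 2 - ln \<kappa>) + g\<^sup>2 * ln 2 < (\<eta>\<^sup>2 - g\<^sup>2 * \<beta>) * ln M1"
        using exp_le_imp_mult_ln_gt[OF params(7), of C M1] M1 by (simp add: C_def)
    qed (use \<beta>2 eps_pos \<open>real N \<le> M1\<close> in auto)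
  qed
qed

end
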